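(* Let $M$ be an end-decisive MM-QFA that accepts $L$ with bounded error, and let $M'$ be an end-decisive MM-QFA that accepts $L'$ with bounded positive one-sided error. Then there exists an MM-QFA $M''$ that accepts $L\cap L'$ with bounded error.
   Context: A measure-many quantum finite automaton (MM-QFA) over $\Sigma$ is a tuple $(Q,\Sigma,\{U_\sigma\}_{\sigma\in\Sigma\cup\{\$\}},q_0,Q_{acc},Q_{rej})$ with $Q$ finite indexing an orthonormal basis of $\mathbb{C}^Q$, end-marker $\$\notin\Sigma$, unitary $U_\sigma$, initial state $q_0$, and $Q$ partitioned into $Q_{acc},Q_{rej},Q_{non}$ with orthogonal projections $P_{acc},P_{rej},P_{non}$. On input $x$ it processes $x\$$ maintaining $(\psi,p_{acc},p_{rej})$, initially $(|q_0\rangle,0,0)$; on reading $\sigma$: $\psi'=U_\sigma\psi$, $p_{acc}\mathrel{+}=\|P_{acc}\psi'\|^2$, $p_{rej}\mathrel{+}=\|P_{rej}\psi'\|^2$, $\psi\leftarrow P_{non}\psi'$; the acceptance probability $p(x)$ is the final $p_{acc}$. It is end-decisive if $P_{acc}\psi'=0$ after reading every non-end-marker symbol, on every input. It accepts $K$ with bounded error if for some $\lambda$ and $\epsilon>0$, $p(x)>\lambda+\epsilon$ for $x\in K$ and $p(x)<\lambda-\epsilon$ for $x\notin K$; it accepts $K$ with bounded positive one-sided error if there is $c>0$ with $p(x)>c$ for $x\in K$ and $p(x)=0$ for $x\notin K$. *)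

theory Defs
  imports Complex_Main "Jordan_Normal_Form.Matrix"
begin

text \<open>An MM-QFA over the alphabet given by the type 'a. The state set Q is {0..<qdim M},
  indexing the standard orthonormal basis of C^Q. The input symbols are Some s (s :: 'a),
  the end-marker is None.\<close>

record 'a mmqfa =
  qdim :: nat
  trans :: "'a option \<Rightarrow> complex mat"
  q0 :: nat
  qacc :: "nat set"
  qrej :: "nat set"

definition qnon :: "'a mmqfa \<Rightarrow> nat set" where
  "qnon M = {0..<qdim M} - qacc M - qrej M"

definition mat_unitary :: "nat \<Rightarrow> complex mat \<Rightarrow> bool" where
  "mat_unitary n U \<longleftrightarrow> U \<in> carrier_mat n n \<and>
     U * mat n n (\<lambda>(i,j). cnj (U $$ (j,i))) = 1\<^sub>m n \<and>
     mat n n (\<lambda>(i,j). cnj (U $$ (j,i))) * U = 1\<^sub>m n"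

definition valid_mmqfa :: "'a mmqfa \<Rightarrow> bool" where
  "valid_mmqfa M \<longleftrightarrow> q0 M < qdim M \<and> qacc M \<subseteq> {0..<qdim M} \<and> qrej M \<subseteq> {0..<qdim M}
     \<and> qacc M \<inter> qrej M = {} \<and> (\<forall>s. mat_unitary (qdim M) (trans M s))"

definition proj_on :: "nat set \<Rightarrow> complex vec \<Rightarrow> complex vec" where
  "proj_on S v = vec (dim_vec v) (\<lambda>i. if i \<in> S then v $ i else 0)"

definition proj_sqnorm :: "nat set \<Rightarrow> complex vec \<Rightarrow> real" where
  "proj_sqnorm S v = (\<Sum>i\<in>{0..<dim_vec v} \<inter> S. (cmod (v $ i))\<^sup>2)"

definition mm_step :: "'a mmqfa \<Rightarrow> 'a option \<Rightarrow> complex vec \<times> real \<times> real \<Rightarrow> complex vec \<times> real \<times> real" where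
  "mm_step M s c = (case c of (\<psi>, pa, pr) \<Rightarrow>
     (let \<psi>' = trans M s *\<^sub>v \<psi> in
       (proj_on (qnon M) \<psi>', pa + proj_sqnorm (qacc M) \<psi>', pr + proj_sqnorm (qrej M) \<psi>')))"

definition mm_run :: "'a mmqfa \<Rightarrow> 'a option list \<Rightarrow> complex vec \<times> real \<times> real" where
  "mm_run M w = fold (mm_step M) w (unit_vec (qdim M) (q0 M), 0, 0)"

definition acc_prob :: "'a mmqfa \<Rightarrow> 'a list \<Rightarrow> real" where
  "acc_prob M x = fst (snd (mm_run M (map Some x @ [None])))"

definition end_decisive :: "'a mmqfa \<Rightarrow> bool" where
  "end_decisive M \<longleftrightarrow> (\<forall>x s. proj_on (qacc M) (trans M (Some s) *\<^sub>v fst (mm_run M (map Some x)))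
       = 0\<^sub>v (qdim M))"

definition accepts_bounded_error :: "'a mmqfa \<Rightarrow> 'a list set \<Rightarrow> bool" where
  "accepts_bounded_error M K \<longleftrightarrow> (\<exists>thr \<epsilon>::real. \<epsilon> > 0 \<and>
     (\<forall>x. (x \<in> K \<longrightarrow> acc_prob M x > thr + \<epsilon>) \<and> (x \<notin> K \<longrightarrow> acc_prob M x < thr - \<epsilon>)))"

definition accepts_one_sided :: "'a mmqfa \<Rightarrow> 'a list set \<Rightarrow> bool" where
  "accepts_one_sided M K \<longleftrightarrow> (\<exists>c::real. c > 0 \<and>
     (\<forall>x. (x \<in> K \<longrightarrow> acc_prob M x > c) \<and> (x \<notin> K \<longrightarrow> acc_prob M x = 0)))"

end

theory Submission
  imports Defs
begin

text \<open>Run k copies of M and one copy of M' in parallel, i.e. take the Kronecker product of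
  the automata, accepting only where every factor accepts. Since all factors are end-decisive,
  nothing is accepted before the end-marker, and the acceptance probability of the product is
  the product p(x)^k p'(x) of the acceptance probabilities. A word outside L has a probability
  that is nonnegative yet below \<lambda> - \<epsilon>, so if there is one, lo = \<lambda> - \<epsilon> > 0; choosing k with
  lo^k < c hi^k for hi = \<lambda> + \<epsilon> separates L \<inter> L' (probability > c hi^k) from its complement
  (probability \<le> lo^k). If L contains every word, M' itself accepts L \<inter> L' = L'.\<close>

section \<open>Kronecker products\<close>

lemma div_mod_less_of_less_mult:
  fixes k m n :: nat
  assumes "k < m * n"
  shows "k div n < m" "k mod n < n"
proof -
  show "k div n < m" using assms by (simp add: less_mult_imp_div_less)
  have "n > 0" using assms by (cases "n = 0") auto
  then show "k mod n < n" by simp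
qed

lemma mult_add_less_mult:
  fixes i j m n :: nat
  assumes "i < m" "j < n"
  shows "i * n + j < m * n"
proof -
  have "i * n + j < Suc i * n" using assms(2) by simp
  also have "\<dots> \<le> m * n" using assms(1) by (intro mult_right_mono) auto
  finally show ?thesis .
qed

lemma sum_atLeast0LessThan_mult:
  "(\<Sum>k\<in>{0..<m * n}. f k) = (\<Sum>i\<in>{0..<m}. \<Sum>j\<in>{0..<n}. f (i * n + j :: nat))"
proof -
  have "(\<Sum>k\<in>{0..<m * n}. f k) = (\<Sum>i<m. sum f {i * n..<i * n + n})"
    by (simp add: sum.nat_group atLeast0LessThan)
  also have "\<dots> = (\<Sum>i<m. \<Sum>j\<in>{0..<n}. f (i * n + j))"
  proof (rule sum.cong[OF refl])
    fix i show "sum f {i * n..<i * n + n} = (\<Sum>j\<in>{0..<n}. f (i * n + j))"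
      using sum.shift_bounds_nat_ivl[of f 0 "i * n" n] by (simp add: add.commute)
  qed
  finally show ?thesis by (simp add: atLeast0LessThan)
qed

definition kron_vec :: "'a::comm_semiring_1 vec \<Rightarrow> 'a vec \<Rightarrow> 'a vec" where
  "kron_vec a b = vec (dim_vec a * dim_vec b) (\<lambda>k. a $ (k div dim_vec b) * b $ (k mod dim_vec b))"

definition kron_mat :: "'a::comm_semiring_1 mat \<Rightarrow> 'a mat \<Rightarrow> 'a mat" where
  "kron_mat A B = mat (dim_row A * dim_row B) (dim_col A * dim_col B)
     (\<lambda>(r, c). A $$ (r div dim_row B, c div dim_col B) * B $$ (r mod dim_row B, c mod dim_col B))"

lemma dim_kron_vec[simp]: "dim_vec (kron_vec a b) = dim_vec a * dim_vec b"
  by (simp add: kron_vec_def)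

lemma dim_kron_mat[simp]:
  "dim_row (kron_mat A B) = dim_row A * dim_row B"
  "dim_col (kron_mat A B) = dim_col A * dim_col B"
  by (simp_all add: kron_mat_def)

lemma kron_mat_mult_kron_vec:
  assumes "dim_col A = dim_vec a" "dim_col B = dim_vec b"
  shows "kron_mat A B *\<^sub>v kron_vec a b = kron_vec (A *\<^sub>v a) (B *\<^sub>v b)"
proof (rule eq_vecI)
  fix r assume "r < dim_vec (kron_vec (A *\<^sub>v a) (B *\<^sub>v b))"
  hence r: "r < dim_row A * dim_row B" by simp
  note r_idx = div_mod_less_of_less_mult[OF r]
  have "(kron_mat A B *\<^sub>v kron_vec a b) $ r = (\<Sum>k\<in>{0..<dim_col A * dim_col B}.
     A $$ (r div dim_row B, k div dim_col B) * B $$ (r mod dim_row B, k mod dim_col B) *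
     (a $ (k div dim_col B) * b $ (k mod dim_col B)))"
    using r assms by (auto simp: scalar_prod_def kron_mat_def kron_vec_def intro!: sum.cong
        dest: div_mod_less_of_less_mult)
  also have "\<dots> = (\<Sum>i\<in>{0..<dim_col A}. \<Sum>j\<in>{0..<dim_col B}.
     (A $$ (r div dim_row B, i) * a $ i) * (B $$ (r mod dim_row B, j) * b $ j))"
    by (simp add: sum_atLeast0LessThan_mult mult_ac)
  also have "\<dots> = kron_vec (A *\<^sub>v a) (B *\<^sub>v b) $ r"
    using r r_idx assms by (simp add: kron_vec_def scalar_prod_def sum_product)
  finally show "(kron_mat A B *\<^sub>v kron_vec a b) $ r = kron_vec (A *\<^sub>v a) (B *\<^sub>v b) $ r" .
qed simp

lemma kron_mat_mult:
  assumes "dim_col A = dim_row C" "dim_col B = dim_row D"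
  shows "kron_mat A B * kron_mat C D = kron_mat (A * C) (B * D)"
proof (rule eq_matI)
  fix r c assume "r < dim_row (kron_mat (A * C) (B * D))" "c < dim_col (kron_mat (A * C) (B * D))"
  hence r: "r < dim_row A * dim_row B" and c: "c < dim_col C * dim_col D" by auto
  note idx = div_mod_less_of_less_mult[OF r] div_mod_less_of_less_mult[OF c]
  have "(kron_mat A B * kron_mat C D) $$ (r, c) = (\<Sum>k\<in>{0..<dim_col A * dim_col B}.
     A $$ (r div dim_row B, k div dim_col B) * B $$ (r mod dim_row B, k mod dim_col B) *
     (C $$ (k div dim_row D, c div dim_col D) * D $$ (k mod dim_row D, c mod dim_col D)))"
    using r c assms by (auto simp: scalar_prod_def kron_mat_def intro!: sum.cong
        dest: div_mod_less_of_less_mult)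
  also have "\<dots> = (\<Sum>i\<in>{0..<dim_col A}. \<Sum>j\<in>{0..<dim_col B}.
     (A $$ (r div dim_row B, i) * C $$ (i, c div dim_col D)) *
     (B $$ (r mod dim_row B, j) * D $$ (j, c mod dim_col D)))"
    using assms by (simp add: sum_atLeast0LessThan_mult mult_ac)
  also have "\<dots> = kron_mat (A * C) (B * D) $$ (r, c)"
    using r c idx assms by (simp add: kron_mat_def scalar_prod_def sum_product)
  finally show "(kron_mat A B * kron_mat C D) $$ (r, c) = kron_mat (A * C) (B * D) $$ (r, c)" .
qed auto

lemma kron_mat_one: "kron_mat (1\<^sub>m m) (1\<^sub>m n) = 1\<^sub>m (m * n)"
proof (rule eq_matI)
  fix i j assume "i < dim_row (1\<^sub>m (m * n))" "j < dim_col (1\<^sub>m (m * n))"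
  hence i: "i < m * n" and j: "j < m * n" by auto
  note idx = div_mod_less_of_less_mult[OF i] div_mod_less_of_less_mult[OF j]
  show "kron_mat (1\<^sub>m m) (1\<^sub>m n) $$ (i, j) = 1\<^sub>m (m * n) $$ (i, j)"
    using i j idx by (auto simp: kron_mat_def) (metis div_mult_mod_eq)
qed (auto simp: kron_mat_def)

lemma kron_vec_unit_vec:
  assumes "i < m" "j < n"
  shows "kron_vec (unit_vec m i) (unit_vec n j) = (unit_vec (m * n) (i * n + j) :: 'a::comm_semiring_1 vec)"
proof (rule eq_vecI)
  fix k assume "k < dim_vec (unit_vec (m * n) (i * n + j) :: 'a vec)"
  hence k: "k < m * n" by simp
  have "k = i * n + j \<longleftrightarrow> k div n = i \<and> k mod n = j"
    using assms(2) by auto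
  then show "kron_vec (unit_vec m i) (unit_vec n j) $ k = (unit_vec (m * n) (i * n + j) :: 'a vec) $ k"
    using k div_mod_less_of_less_mult[OF k] by (auto simp: kron_vec_def unit_vec_def)
qed simp

definition adjoint_mat :: "nat \<Rightarrow> complex mat \<Rightarrow> complex mat" where
  "adjoint_mat n U = mat n n (\<lambda>(i, j). cnj (U $$ (j, i)))"

lemma mat_unitary_iff_adjoint_mat:
  "mat_unitary n U \<longleftrightarrow>
     U \<in> carrier_mat n n \<and> U * adjoint_mat n U = 1\<^sub>m n \<and> adjoint_mat n U * U = 1\<^sub>m n"
  by (simp add: mat_unitary_def adjoint_mat_def)

lemma dim_adjoint_mat[simp]: "dim_row (adjoint_mat n U) = n" "dim_col (adjoint_mat n U) = n"
  by (simp_all add: adjoint_mat_def)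

lemma adjoint_mat_kron_mat:
  assumes "A \<in> carrier_mat m m" "B \<in> carrier_mat n n"
  shows "adjoint_mat (m * n) (kron_mat A B) = kron_mat (adjoint_mat m A) (adjoint_mat n B)"
proof (rule eq_matI)
  fix i j assume "i < dim_row (kron_mat (adjoint_mat m A) (adjoint_mat n B))"
    "j < dim_col (kron_mat (adjoint_mat m A) (adjoint_mat n B))"
  hence i: "i < m * n" and j: "j < m * n" by auto
  show "adjoint_mat (m * n) (kron_mat A B) $$ (i, j) = kron_mat (adjoint_mat m A) (adjoint_mat n B) $$ (i, j)"
    using assms i j div_mod_less_of_less_mult[OF i] div_mod_less_of_less_mult[OF j]
    by (simp add: adjoint_mat_def kron_mat_def)
qed (use assms in \<open>auto simp: adjoint_mat_def\<close>)

lemma mat_unitary_kron_mat: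
  assumes "mat_unitary m A" "mat_unitary n B"
  shows "mat_unitary (m * n) (kron_mat A B)"
proof -
  have A: "A \<in> carrier_mat m m" "A * adjoint_mat m A = 1\<^sub>m m" "adjoint_mat m A * A = 1\<^sub>m m"
    and B: "B \<in> carrier_mat n n" "B * adjoint_mat n B = 1\<^sub>m n" "adjoint_mat n B * B = 1\<^sub>m n"
    using assms by (auto simp: mat_unitary_iff_adjoint_mat)
  show ?thesis
    unfolding mat_unitary_iff_adjoint_mat adjoint_mat_kron_mat[OF A(1) B(1)]
    using A B by (auto simp: kron_mat_mult kron_mat_one carrier_matD)
qed

definition sqnorm_vec :: "complex vec \<Rightarrow> real" where
  "sqnorm_vec v = (\<Sum>i\<in>{0..<dim_vec v}. (cmod (v $ i))\<^sup>2)"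

lemma proj_sqnorm_nonneg: "0 \<le> proj_sqnorm S v"
  unfolding proj_sqnorm_def by (intro sum_nonneg) auto

lemma proj_sqnorm_le_sqnorm_vec: "proj_sqnorm S v \<le> sqnorm_vec v"
  unfolding proj_sqnorm_def sqnorm_vec_def by (intro sum_mono2) auto

lemma sqnorm_vec_proj_on_le: "sqnorm_vec (proj_on S v) \<le> sqnorm_vec v"
  unfolding sqnorm_vec_def proj_on_def by (simp add: sum_mono)

lemma complex_of_real_sqnorm_vec:
  "complex_of_real (sqnorm_vec v) = (\<Sum>i\<in>{0..<dim_vec v}. v $ i * cnj (v $ i))"
  unfolding sqnorm_vec_def of_real_sum by (intro sum.cong refl) (rule complex_norm_square)

lemma sqnorm_vec_unitary_mult:
  assumes "mat_unitary n U" "dim_vec v = n"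
  shows "sqnorm_vec (U *\<^sub>v v) = sqnorm_vec v"
proof -
  have U: "U \<in> carrier_mat n n" and U_adj_U: "adjoint_mat n U * U = 1\<^sub>m n"
    using assms(1) by (auto simp: mat_unitary_iff_adjoint_mat)
  have orthonormal_cols: "(\<Sum>i\<in>{0..<n}. cnj (U $$ (i, l)) * U $$ (i, j)) = (if l = j then 1 else 0)"
    if "l < n" "j < n" for l j
  proof -
    have "(adjoint_mat n U * U) $$ (l, j) = (\<Sum>i\<in>{0..<n}. cnj (U $$ (i, l)) * U $$ (i, j))"
      using that U by (simp add: adjoint_mat_def scalar_prod_def)
    then show ?thesis using U_adj_U that by simp
  qed
  have "complex_of_real (sqnorm_vec (U *\<^sub>v v)) =
      (\<Sum>i\<in>{0..<n}. (\<Sum>j\<in>{0..<n}. U $$ (i, j) * v $ j) * (\<Sum>l\<in>{0..<n}. cnj (U $$ (i, l)) * cnj (v $ l)))"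
    using U assms(2) by (simp add: complex_of_real_sqnorm_vec scalar_prod_def cnj_sum)
  also have "\<dots> = (\<Sum>i\<in>{0..<n}. \<Sum>j\<in>{0..<n}. \<Sum>l\<in>{0..<n}.
      (v $ j * cnj (v $ l)) * (cnj (U $$ (i, l)) * U $$ (i, j)))"
    by (simp add: sum_product mult_ac)
  also have "\<dots> = (\<Sum>j\<in>{0..<n}. \<Sum>l\<in>{0..<n}. \<Sum>i\<in>{0..<n}.
      (v $ j * cnj (v $ l)) * (cnj (U $$ (i, l)) * U $$ (i, j)))"
    by (subst sum.swap, rule sum.cong[OF refl], rule sum.swap)
  also have "\<dots> = (\<Sum>j\<in>{0..<n}. \<Sum>l\<in>{0..<n}. (v $ j * cnj (v $ l)) * (if l = j then 1 else 0))"
    by (simp add: sum_distrib_left[symmetric] orthonormal_cols)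
  also have "\<dots> = complex_of_real (sqnorm_vec v)"
    using assms(2) by (simp add: complex_of_real_sqnorm_vec if_distrib cong: if_cong)
  finally show ?thesis by (simp only: of_real_eq_iff)
qed

lemma mm_run_snoc: "mm_run M (w @ [s]) = mm_step M s (mm_run M w)"
  by (simp add: mm_run_def)

lemma fst_mm_step: "fst (mm_step M s c) = proj_on (qnon M) (trans M s *\<^sub>v fst c)"
  by (cases c) (simp add: mm_step_def Let_def)

lemma fst_snd_mm_step:
  "fst (snd (mm_step M s c)) = fst (snd c) + proj_sqnorm (qacc M) (trans M s *\<^sub>v fst c)"
  by (cases c) (simp add: mm_step_def Let_def)

lemma valid_mmqfa_dim_trans:
  assumes "valid_mmqfa M"
  shows "dim_row (trans M s) = qdim M" "dim_col (trans M s) = qdim M"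
proof -
  have "trans M s \<in> carrier_mat (qdim M) (qdim M)"
    using assms by (simp add: valid_mmqfa_def mat_unitary_def)
  then show "dim_row (trans M s) = qdim M" "dim_col (trans M s) = qdim M" by auto
qed

lemma dim_proj_on[simp]: "dim_vec (proj_on S v) = dim_vec v"
  by (simp add: proj_on_def)

lemma dim_fst_mm_run:
  assumes "valid_mmqfa M"
  shows "dim_vec (fst (mm_run M w)) = qdim M"
proof (induction w rule: rev_induct)
  case Nil
  show ?case by (simp add: mm_run_def)
next
  case (snoc s w)
  then show ?case
    by (simp add: mm_run_snoc fst_mm_step valid_mmqfa_dim_trans[OF assms])
qed

lemma sqnorm_vec_fst_mm_run_le_1:
  assumes "valid_mmqfa M"
  shows "sqnorm_vec (fst (mm_run M w)) \<le> 1"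
proof (induction w rule: rev_induct)
  case Nil
  have "sqnorm_vec (unit_vec (qdim M) (q0 M)) = (\<Sum>i\<in>{0..<qdim M}. if i = q0 M then 1 else 0)"
    unfolding sqnorm_vec_def by (intro sum.cong refl) (auto simp: unit_vec_def)
  also have "\<dots> = 1" using assms by (simp add: valid_mmqfa_def)
  finally show ?case by (simp add: mm_run_def)
next
  case (snoc s w)
  have "mat_unitary (qdim M) (trans M s)" using assms by (simp add: valid_mmqfa_def)
  have "sqnorm_vec (fst (mm_run M (w @ [s]))) \<le> sqnorm_vec (trans M s *\<^sub>v fst (mm_run M w))"
    by (simp add: mm_run_snoc fst_mm_step sqnorm_vec_proj_on_le)
  also have "\<dots> = sqnorm_vec (fst (mm_run M w))"
    using sqnorm_vec_unitary_mult[OF \<open>mat_unitary (qdim M) (trans M s)\<close> dim_fst_mm_run[OF assms]] .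
  finally show ?case using snoc.IH by simp
qed

lemma acc_prob_nonneg: "0 \<le> acc_prob M x"
proof -
  have "0 \<le> fst (snd (mm_run M w))" for w
    by (induction w rule: rev_induct)
      (simp_all add: mm_run_def fst_snd_mm_step proj_sqnorm_nonneg)
  then show ?thesis by (simp add: acc_prob_def)
qed

lemma end_decisive_acc_component:
  assumes "end_decisive M" "valid_mmqfa M" "i \<in> qacc M"
  shows "(trans M (Some s) *\<^sub>v fst (mm_run M (map Some x))) $ i = 0"
proof -
  have "i < qdim M" using assms(2,3) by (auto simp: valid_mmqfa_def)
  moreover have "proj_on (qacc M) (trans M (Some s) *\<^sub>v fst (mm_run M (map Some x))) = 0\<^sub>v (qdim M)"
    using assms(1) by (simp add: end_decisive_def)
  ultimately show ?thesis
    using assms(3) valid_mmqfa_dim_trans[OF assms(2)]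
    by (auto simp: proj_on_def dest: arg_cong[of _ _ "\<lambda>v. v $ i"] split: if_splits)
qed

lemma acc_prob_end_decisive:
  assumes "end_decisive M" "valid_mmqfa M"
  shows "acc_prob M x = proj_sqnorm (qacc M) (trans M None *\<^sub>v fst (mm_run M (map Some x)))"
proof -
  have "fst (snd (mm_run M (map Some y))) = 0" for y
  proof (induction y rule: rev_induct)
    case (snoc s y)
    have "proj_sqnorm (qacc M) (trans M (Some s) *\<^sub>v fst (mm_run M (map Some y))) = 0"
      unfolding proj_sqnorm_def
      by (rule sum.neutral) (simp del: index_mult_mat_vec add: end_decisive_acc_component[OF assms])
    with snoc.IH show ?case by (simp add: mm_run_snoc fst_snd_mm_step)
  qed (simp add: mm_run_def)
  then show ?thesis by (simp add: acc_prob_def mm_run_snoc fst_snd_mm_step)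
qed

lemma acc_prob_le_1:
  assumes "end_decisive M" "valid_mmqfa M"
  shows "acc_prob M x \<le> 1"
proof -
  have "mat_unitary (qdim M) (trans M None)" using assms(2) by (simp add: valid_mmqfa_def)
  have "acc_prob M x \<le> sqnorm_vec (trans M None *\<^sub>v fst (mm_run M (map Some x)))"
    by (simp add: acc_prob_end_decisive[OF assms] proj_sqnorm_le_sqnorm_vec)
  also have "\<dots> = sqnorm_vec (fst (mm_run M (map Some x)))"
    using sqnorm_vec_unitary_mult[OF \<open>mat_unitary (qdim M) (trans M None)\<close> dim_fst_mm_run[OF assms(2)]] .
  also have "\<dots> \<le> 1" using sqnorm_vec_fst_mm_run_le_1[OF assms(2)] .
  finally show ?thesis .
qed

section \<open>The product automaton\<close>

text \<open>The product halts as soon as one factor halts and accepts only if both accept. Before the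
  end-marker an end-decisive factor can only halt by rejecting, which is why the acceptance
  probability of the product comes out multiplicative.\<close>

definition prod_mmqfa :: "'a mmqfa \<Rightarrow> 'a mmqfa \<Rightarrow> 'a mmqfa" where
  "prod_mmqfa M N = \<lparr>qdim = qdim M * qdim N, trans = (\<lambda>s. kron_mat (trans M s) (trans N s)),
     q0 = q0 M * qdim N + q0 N,
     qacc = {k. k < qdim M * qdim N \<and> k div qdim N \<in> qacc M \<and> k mod qdim N \<in> qacc N},
     qrej = {k. k < qdim M * qdim N \<and> \<not> (k div qdim N \<in> qacc M \<and> k mod qdim N \<in> qacc N)
        \<and> \<not> (k div qdim N \<in> qnon M \<and> k mod qdim N \<in> qnon N)}\<rparr>"

lemma prod_mmqfa_simps[simp]:
  "qdim (prod_mmqfa M N) = qdim M * qdim N"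
  "trans (prod_mmqfa M N) s = kron_mat (trans M s) (trans N s)"
  "q0 (prod_mmqfa M N) = q0 M * qdim N + q0 N"
  by (simp_all add: prod_mmqfa_def)

lemma qacc_prod_mmqfa:
  "k \<in> qacc (prod_mmqfa M N) \<longleftrightarrow>
     k < qdim M * qdim N \<and> k div qdim N \<in> qacc M \<and> k mod qdim N \<in> qacc N"
  by (simp add: prod_mmqfa_def)

lemma qnon_prod_mmqfa:
  "k < qdim M * qdim N \<Longrightarrow>
     k \<in> qnon (prod_mmqfa M N) \<longleftrightarrow> k div qdim N \<in> qnon M \<and> k mod qdim N \<in> qnon N"
  by (auto simp: qnon_def prod_mmqfa_def)

lemma valid_prod_mmqfa:
  assumes "valid_mmqfa M" "valid_mmqfa N"
  shows "valid_mmqfa (prod_mmqfa M N)"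
proof -
  have "q0 M * qdim N + q0 N < qdim M * qdim N"
    using assms by (intro mult_add_less_mult) (auto simp: valid_mmqfa_def)
  then show ?thesis
    using assms unfolding valid_mmqfa_def by (auto simp: mat_unitary_kron_mat prod_mmqfa_def)
qed

lemma proj_on_qnon_prod_mmqfa:
  assumes "dim_vec a = qdim M" "dim_vec b = qdim N"
  shows "proj_on (qnon (prod_mmqfa M N)) (kron_vec a b) =
    kron_vec (proj_on (qnon M) a) (proj_on (qnon N) b)"
proof (rule eq_vecI)
  fix k assume "k < dim_vec (kron_vec (proj_on (qnon M) a) (proj_on (qnon N) b))"
  hence k: "k < qdim M * qdim N" using assms by simp
  show "proj_on (qnon (prod_mmqfa M N)) (kron_vec a b) $ k =
      kron_vec (proj_on (qnon M) a) (proj_on (qnon N) b) $ k"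
    using k div_mod_less_of_less_mult[OF k] assms
    by (simp add: proj_on_def kron_vec_def qnon_prod_mmqfa)
qed simp

lemma proj_sqnorm_qacc_prod_mmqfa:
  assumes "dim_vec a = qdim M" "dim_vec b = qdim N"
  shows "proj_sqnorm (qacc (prod_mmqfa M N)) (kron_vec a b) =
    proj_sqnorm (qacc M) a * proj_sqnorm (qacc N) b"
proof -
  have "proj_sqnorm (qacc (prod_mmqfa M N)) (kron_vec a b) =
      (\<Sum>i\<in>{0..<qdim M}. \<Sum>j\<in>{0..<qdim N}.
        (if i \<in> qacc M then (cmod (a $ i))\<^sup>2 else 0) * (if j \<in> qacc N then (cmod (b $ j))\<^sup>2 else 0))"
    unfolding proj_sqnorm_def sum.inter_restrict[OF finite_atLeastLessThan] using assms
    by (auto simp: sum_atLeast0LessThan_mult qacc_prod_mmqfa kron_vec_def norm_mult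
        power_mult_distrib mult_add_less_mult intro!: sum.cong)
  then show ?thesis
    unfolding proj_sqnorm_def sum.inter_restrict[OF finite_atLeastLessThan] using assms
    by (simp add: sum_product)
qed

lemma fst_mm_run_prod_mmqfa:
  assumes "valid_mmqfa M" "valid_mmqfa N"
  shows "fst (mm_run (prod_mmqfa M N) (map Some x)) =
    kron_vec (fst (mm_run M (map Some x))) (fst (mm_run N (map Some x)))"
proof (induction x rule: rev_induct)
  case Nil
  show ?case using assms by (simp add: mm_run_def kron_vec_unit_vec valid_mmqfa_def)
next
  case (snoc s x)
  then show ?case
    by (simp add: mm_run_snoc fst_mm_step kron_mat_mult_kron_vec proj_on_qnon_prod_mmqfa
        dim_fst_mm_run assms valid_mmqfa_dim_trans)
qed

lemma kron_mat_mult_fst_mm_run_prod_mmqfa: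
  assumes "valid_mmqfa M" "valid_mmqfa N"
  shows "kron_mat (trans M s) (trans N s) *\<^sub>v fst (mm_run (prod_mmqfa M N) (map Some x)) =
    kron_vec (trans M s *\<^sub>v fst (mm_run M (map Some x))) (trans N s *\<^sub>v fst (mm_run N (map Some x)))"
  by (simp add: fst_mm_run_prod_mmqfa assms kron_mat_mult_kron_vec dim_fst_mm_run valid_mmqfa_dim_trans)

lemma end_decisive_prod_mmqfa:
  assumes "end_decisive M" "valid_mmqfa M" "valid_mmqfa N"
  shows "end_decisive (prod_mmqfa M N)"
  unfolding end_decisive_def
proof (intro allI eq_vecI)
  fix x s k
  assume "k < dim_vec (0\<^sub>v (qdim (prod_mmqfa M N)) :: complex vec)"
  hence k: "k < qdim M * qdim N" by simp
  show "proj_on (qacc (prod_mmqfa M N))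
      (trans (prod_mmqfa M N) (Some s) *\<^sub>v fst (mm_run (prod_mmqfa M N) (map Some x))) $ k =
    0\<^sub>v (qdim (prod_mmqfa M N)) $ k"
    using k div_mod_less_of_less_mult[OF k]
    unfolding prod_mmqfa_simps(2) kron_mat_mult_fst_mm_run_prod_mmqfa[OF assms(2,3)]
    by (simp add: proj_on_def kron_vec_def qacc_prod_mmqfa assms valid_mmqfa_dim_trans
        end_decisive_acc_component[OF assms(1,2)] del: index_mult_mat_vec)
qed (simp add: assms valid_mmqfa_dim_trans)

lemma acc_prob_prod_mmqfa:
  assumes "end_decisive M" "valid_mmqfa M" "end_decisive N" "valid_mmqfa N"
  shows "acc_prob (prod_mmqfa M N) x = acc_prob M x * acc_prob N x"
  unfolding acc_prob_end_decisive[OF end_decisive_prod_mmqfa valid_prod_mmqfa, OF assms(1,2,4,2,4)]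
    prod_mmqfa_simps(2) kron_mat_mult_fst_mm_run_prod_mmqfa[OF assms(2,4)]
  by (simp add: proj_sqnorm_qacc_prod_mmqfa acc_prob_end_decisive assms valid_mmqfa_dim_trans)

lemma iterated_prod_mmqfa:
  assumes "end_decisive M" "valid_mmqfa M" "end_decisive N" "valid_mmqfa N"
  shows "valid_mmqfa ((prod_mmqfa M ^^ k) N) \<and> end_decisive ((prod_mmqfa M ^^ k) N) \<and>
    (\<forall>x. acc_prob ((prod_mmqfa M ^^ k) N) x = acc_prob M x ^ k * acc_prob N x)"
proof (induction k)
  case (Suc k)
  then show ?case
    by (simp add: assms valid_prod_mmqfa end_decisive_prod_mmqfa acc_prob_prod_mmqfa)
qed (simp add: assms)

section \<open>Amplification\<close>

lemma accepts_bounded_error_if_gap: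
  fixes a b :: real
  assumes "a < b"
    and "\<And>x. x \<in> K \<Longrightarrow> b \<le> acc_prob M x" and "\<And>x. x \<notin> K \<Longrightarrow> acc_prob M x \<le> a"
  shows "accepts_bounded_error M K"
  unfolding accepts_bounded_error_def
proof (intro exI conjI allI impI)
  show "0 < (b - a) / 4" using assms(1) by simp
  fix x
  show "(a + b) / 2 + (b - a) / 4 < acc_prob M x" if "x \<in> K"
    using assms(1) assms(2)[OF that] by (simp add: field_simps)
  show "acc_prob M x < (a + b) / 2 - (b - a) / 4" if "x \<notin> K"
    using assms(1) assms(3)[OF that] by (simp add: field_simps)
qed

lemma accepts_bounded_error_if_one_sided:
  assumes "accepts_one_sided M K"
  shows "accepts_bounded_error M K"
proof -
  obtain c where "0 < c" "\<And>x. x \<in> K \<Longrightarrow> c < acc_prob M x" "\<And>x. x \<notin> K \<Longrightarrow> acc_prob M x = 0"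
    using assms by (auto simp: accepts_one_sided_def)
  then show ?thesis by (intro accepts_bounded_error_if_gap[of 0 c]) (auto intro!: less_imp_le)
qed

lemma exists_power_gap:
  fixes lo hi c :: real
  assumes "0 < lo" "lo < hi" "0 < c"
  shows "\<exists>k>0. lo ^ k < c * hi ^ k"
proof -
  have "lo / hi < 1" using assms(1,2) by simp
  then obtain n where n: "(lo / hi) ^ n < c" using real_arch_pow_inv[OF assms(3)] by blast
  have "(lo / hi) ^ Suc n \<le> (lo / hi) ^ n"
    using assms(1,2) by (intro power_decreasing) auto
  with n have "lo ^ Suc n / hi ^ Suc n < c" by (simp add: power_divide)
  then have "lo ^ Suc n < c * hi ^ Suc n" using assms(1,2) by (simp add: divide_less_eq)
  then show ?thesis by blast
qed

lemma accepts_bounded_error_Int_iterated_prod_mmqfa: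
  fixes lo hi c :: real
  assumes M: "end_decisive M" "valid_mmqfa M" and M': "end_decisive M'" "valid_mmqfa M'"
    and "0 \<le> lo" "0 \<le> hi" "lo ^ k < c * hi ^ k"
    and L: "\<And>x. x \<in> L \<Longrightarrow> hi < acc_prob M x" "\<And>x. x \<notin> L \<Longrightarrow> acc_prob M x < lo"
    and L': "\<And>x. x \<in> L' \<Longrightarrow> c < acc_prob M' x" "\<And>x. x \<notin> L' \<Longrightarrow> acc_prob M' x = 0"
  shows "accepts_bounded_error ((prod_mmqfa M ^^ k) M') (L \<inter> L')"
proof (rule accepts_bounded_error_if_gap)
  have acc: "acc_prob ((prod_mmqfa M ^^ k) M') x = acc_prob M x ^ k * acc_prob M' x" for x
    using iterated_prod_mmqfa[OF M M'] by blast
  note bounds = acc_prob_nonneg acc_prob_le_1[OF M'] 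
  show "lo ^ k < c * hi ^ k" by fact
  fix x
  show "c * hi ^ k \<le> acc_prob ((prod_mmqfa M ^^ k) M') x" if "x \<in> L \<inter> L'"
  proof -
    have "hi \<le> acc_prob M x" using L(1) that by (simp add: less_imp_le)
    then have "hi ^ k \<le> acc_prob M x ^ k" using \<open>0 \<le> hi\<close> by (intro power_mono)
    moreover have "c \<le> acc_prob M' x" using L'(1) that by (simp add: less_imp_le)
    ultimately have "c * hi ^ k \<le> acc_prob M' x * acc_prob M x ^ k"
      using \<open>0 \<le> hi\<close> bounds by (intro mult_mono) auto
    then show ?thesis by (simp add: acc mult.commute)
  qed
  show "acc_prob ((prod_mmqfa M ^^ k) M') x \<le> lo ^ k" if "x \<notin> L \<inter> L'"
  proof (cases "x \<in> L")
    case True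
    then show ?thesis using that L'(2) \<open>0 \<le> lo\<close> by (simp add: acc)
  next
    case False
    have "acc_prob M x ^ k * acc_prob M' x \<le> acc_prob M x ^ k"
      by (rule mult_left_le[OF acc_prob_le_1[OF M'] zero_le_power[OF acc_prob_nonneg]])
    also have "\<dots> \<le> lo ^ k" using L(2)[OF False] bounds by (intro power_mono) auto
    finally show ?thesis by (simp add: acc)
  qed
qed

theorem lemma4p14:
  fixes M M' :: "('a::finite) mmqfa" and L L' :: "'a list set"
  assumes "valid_mmqfa M" and "end_decisive M" and "accepts_bounded_error M L"
    and "valid_mmqfa M'" and "end_decisive M'" and "accepts_one_sided M' L'"
  shows "\<exists>M'' :: 'a mmqfa. valid_mmqfa M'' \<and> accepts_bounded_error M'' (L \<inter> L')"
proof (cases "L = UNIV")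
  case True
  then show ?thesis using assms(4,6) accepts_bounded_error_if_one_sided by auto
next
  case False
  obtain thr e where "0 < e"
    and L: "\<And>x. x \<in> L \<Longrightarrow> thr + e < acc_prob M x" "\<And>x. x \<notin> L \<Longrightarrow> acc_prob M x < thr - e"
    using assms(3) by (auto simp: accepts_bounded_error_def)
  obtain c where "0 < c"
    and L': "\<And>x. x \<in> L' \<Longrightarrow> c < acc_prob M' x" "\<And>x. x \<notin> L' \<Longrightarrow> acc_prob M' x = 0"
    using assms(6) by (auto simp: accepts_one_sided_def)
  from False obtain x0 where "x0 \<notin> L" by blast
  then have "0 < thr - e" using L(2) acc_prob_nonneg[of M x0] by fastforce
  then obtain k where "(thr - e) ^ k < c * (thr + e) ^ k"
    using exists_power_gap[of "thr - e" "thr + e" c] \<open>0 < e\<close> \<open>0 < c\<close> by auto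
  then have "accepts_bounded_error ((prod_mmqfa M ^^ k) M') (L \<inter> L')"
    using \<open>0 < thr - e\<close> \<open>0 < e\<close>
    by (intro accepts_bounded_error_Int_iterated_prod_mmqfa[OF assms(2,1,5,4) _ _ _ L L']) auto
  then show ?thesis using iterated_prod_mmqfa[OF assms(2,1,5,4)] by blast
qed

end
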